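(* Let $v:\mathbb{R}\to[1,\infty)$ be an admissible function. Then there is an admissible function $\tilde v\in C^\infty(\mathbb{R})$ equivalent to $v$, i.e. such that $\frac1c\tilde v\le v\le c\tilde v$ for some $c>0$. If $v$ is even, then $\tilde v$ can be chosen to be even as well.
   Context: A measurable function $v:\mathbb{R}\to(0,\infty)$ is called admissible if $v(s)\ge1$ for all $s\in\mathbb{R}$ and $\sup_{s,t\in\mathbb{R}}\frac{v(s+t)}{v(s)+v(t)}<\infty$. *)

theory Defs
  imports "HOL-Analysis.Analysis"
begin

definition admissible :: "(real \<Rightarrow> real) \<Rightarrow> bool" where
  "admissible v \<longleftrightarrow> v \<in> borel_measurable borel \<and> (\<forall>s. v s \<ge> 1) \<and>
     (\<exists>C. \<forall>s t. v (s + t) / (v s + v t) \<le> C)"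

definition smooth_real :: "(real \<Rightarrow> real) \<Rightarrow> bool" where
  "smooth_real f \<longleftrightarrow> (\<exists>D :: nat \<Rightarrow> real \<Rightarrow> real. D 0 = f \<and>
     (\<forall>n x. (D n has_real_derivative D (Suc n) x) (at x)))"

end

(* A Steinhaus-type argument makes an admissible v locally bounded: some sublevel set
   {v \<le> c} fills most of [-2, 2], so every y with |y| \<le> 1 is a sum of two of its points,
   and v y \<le> 2 C c by the admissibility bound v (s + t) \<le> C (v s + v t). Consequently
   v x \<le> K v y whenever |x - y| \<le> 1. Sampling v at the integers and blending with translates
   of a smooth bump \<phi> supported in (-1, 1), w x = 1 + \<Sum>\<^sub>n v n \<phi> (x - n) is smooth and
   comparable to v from both sides, even when v is, and admissibility passes to comparable
   weights. *)

theory Submission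
  imports Defs "HOL-Computational_Algebra.Polynomial"
begin

section \<open>Local comparability of admissible weights\<close>

lemma admissible_add_le:
  assumes "admissible v"
  obtains C where "C > 0" "\<And>s t. v (s + t) \<le> C * (v s + v t)"
proof -
  from assms obtain C where C: "\<And>s t. v (s + t) / (v s + v t) \<le> C" and v1: "\<And>s. v s \<ge> 1"
    unfolding admissible_def by blast
  have "v (s + t) \<le> C * (v s + v t)" for s t
    using C[of s t] v1[of s] v1[of t] by (simp add: pos_divide_le_eq mult.commute)
  moreover have "0 < v 0 / (v 0 + v 0)"
    using v1[of 0] by simp
  then have "C > 0"
    using C[of 0 0] by simp
  ultimately show ?thesis using that by blast
qed

lemma measure_lborel_reflect:
  fixes A :: "real set"
  assumes "A \<in> sets borel"
  shows "measure lborel ((\<lambda>t. y - t) -` A) = measure lborel A"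
proof -
  have "distr lborel borel (\<lambda>t::real. y - t) = distr (distr lborel borel uminus) borel ((+) y)"
    by (subst distr_distr) (auto simp: o_def)
  also have "\<dots> = lborel" by (simp add: lborel_distr_uminus lborel_distr_plus)
  finally have "measure lborel A = measure (distr lborel borel (\<lambda>t::real. y - t)) A" by simp
  also have "\<dots> = measure lborel ((\<lambda>t. y - t) -` A)"
    using assms by (subst measure_distr) auto
  finally show ?thesis ..
qed

lemma large_set_meets_reflection:
  fixes A :: "real set"
  assumes A: "A \<in> sets borel" "A \<subseteq> {-r..r}" and "0 \<le> r" and y: "\<bar>y\<bar> \<le> s"
    and large: "measure lborel A > r + s"
  shows "\<exists>a\<in>A. y - a \<in> A"
proof (rule ccontr)
  assume no_pair: "\<not> ?thesis"
  define B where "B = (\<lambda>t. y - t) -` A"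
  have "(\<lambda>t::real. y - t) \<in> borel_measurable borel" by measurable
  then have B_meas: "B \<in> sets borel"
    using measurable_sets[OF _ A(1), of "\<lambda>t. y - t" borel] by (simp add: B_def)
  have s0: "0 \<le> s" using y by linarith
  have B_sub: "B \<subseteq> {-(r+s)..r+s}"
  proof
    fix t assume "t \<in> B"
    then have "y - t \<in> {-r..r}" using A(2) by (auto simp: B_def)
    then show "t \<in> {-(r+s)..r+s}" using y by (auto simp: abs_le_iff)
  qed
  have B_measure: "measure lborel B = measure lborel A"
    unfolding B_def by (rule measure_lborel_reflect[OF A(1)])
  have disjoint: "A \<inter> B = {}" using no_pair by (auto simp: B_def)
  have I: "{-(r+s)..r+s} \<in> fmeasurable lborel"
    by (simp add: fmeasurable_def emeasure_lborel_Icc_eq)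
  have A_sub: "A \<subseteq> {-(r+s)..r+s}" using A(2) s0 by auto
  have fin: "A \<in> fmeasurable lborel" "B \<in> fmeasurable lborel"
    using fmeasurableI2[OF I A_sub] fmeasurableI2[OF I B_sub] A(1) B_meas by simp_all
  have "2 * measure lborel A = measure lborel (A \<union> B)"
    using measure_Un3[OF fin] disjoint B_measure by simp
  also have "\<dots> \<le> measure lborel {-(r+s)..r+s}"
    using A_sub B_sub B_meas A(1) I by (intro measure_mono_fmeasurable) auto
  also have "\<dots> = 2 * (r + s)"
    using \<open>0 \<le> r\<close> s0 by simp
  finally show False using large by simp
qed

lemma large_sublevel_set:
  fixes f :: "real \<Rightarrow> real"
  assumes [measurable]: "f \<in> borel_measurable borel" and "a \<le> b" "m < b - a"
  shows "\<exists>c. m < measure lborel {y\<in>{a..b}. f y \<le> c}"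
proof -
  define A where "A i = {y\<in>{a..b}. f y \<le> real i}" for i :: nat
  have A_sets: "A i \<in> sets lborel" for i unfolding A_def by measurable
  have U: "(\<Union>i. A i) = {a..b}"
    unfolding A_def by (auto intro: real_nat_ceiling_ge)
  have "(\<lambda>i. measure lborel (A i)) \<longlonglongrightarrow> measure lborel (\<Union>i. A i)"
  proof (rule Lim_measure_incseq)
    show "incseq A" unfolding A_def incseq_def by auto
  qed (use A_sets U in \<open>auto simp: emeasure_lborel_Icc_eq\<close>)
  then have "(\<lambda>i. measure lborel (A i)) \<longlonglongrightarrow> b - a"
    using assms(2) by (simp add: U)
  then obtain i where "m < measure lborel (A i)"
    using order_tendstoD(1)[OF _ assms(3)] by (metis eventually_sequentially order.refl)
  then show ?thesis unfolding A_def by blast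
qed

lemma admissible_bounded_near_0:
  assumes "admissible v"
  obtains B where "\<And>y. \<bar>y\<bar> \<le> 1 \<Longrightarrow> v y \<le> B"
proof -
  have meas[measurable]: "v \<in> borel_measurable borel"
    using assms unfolding admissible_def by blast
  obtain C where C: "C > 0" "\<And>s t. v (s + t) \<le> C * (v s + v t)"
    using admissible_add_le[OF assms] by blast
  obtain c where c: "3 < measure lborel {y\<in>{-2..2}. v y \<le> c}"
    using large_sublevel_set[OF meas, of "-2" 2 3] by auto
  define A where "A = {y\<in>{-2..2}. v y \<le> c}"
  have A_meas: "A \<in> sets borel" unfolding A_def by measurable
  have "v y \<le> 2 * C * c" if y: "\<bar>y\<bar> \<le> 1" for y
  proof -
    have "\<exists>a\<in>A. y - a \<in> A"
      by (rule large_set_meets_reflection[OF A_meas _ _ y, of 2]) (use c in \<open>auto simp: A_def\<close>)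
    then obtain a where a: "a \<in> A" "y - a \<in> A" by blast
    have "v y = v (a + (y - a))" by simp
    also have "\<dots> \<le> C * (v a + v (y - a))" by (rule C(2))
    also have "\<dots> \<le> C * (c + c)"
      using a C(1) unfolding A_def by (intro mult_left_mono add_mono) auto
    finally show ?thesis by simp
  qed
  then show ?thesis using that by blast
qed

lemma admissible_neighbour_le:
  assumes "admissible v"
  obtains K where "\<And>x y. \<bar>x - y\<bar> \<le> 1 \<Longrightarrow> v x \<le> K * v y"
proof -
  have v1: "\<And>s. v s \<ge> 1" using assms unfolding admissible_def by blast
  obtain C where C: "C > 0" "\<And>s t. v (s + t) \<le> C * (v s + v t)"
    using admissible_add_le[OF assms] by blast
  obtain B where B: "\<And>y. \<bar>y\<bar> \<le> 1 \<Longrightarrow> v y \<le> B"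
    using admissible_bounded_near_0[OF assms] by blast
  have B1: "1 \<le> B" using B[of 0] v1[of 0] by simp
  have "v x \<le> C * (1 + B) * v y" if "\<bar>x - y\<bar> \<le> 1" for x y
  proof -
    have "v x = v (y + (x - y))" by simp
    also have "\<dots> \<le> C * (v y + v (x - y))" by (rule C(2))
    also have "\<dots> \<le> C * (v y + B * v y)"
      using B[OF that] v1[of y] B1 C(1)
      by (intro mult_left_mono add_left_mono) (auto intro: order.trans[of _ B] simp: mult_le_cancel_left1)
    finally show ?thesis by (simp add: algebra_simps)
  qed
  then show ?thesis using that by blast
qed

section \<open>Smooth functions as sequences of successive derivatives\<close>

definition successive_derivs :: "(nat \<Rightarrow> real \<Rightarrow> real) \<Rightarrow> bool" where
  "successive_derivs D \<longleftrightarrow> (\<forall>n x. (D n has_real_derivative D (Suc n) x) (at x))"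

lemma smooth_real_iff_successive_derivs:
  "smooth_real f \<longleftrightarrow> (\<exists>D. D 0 = f \<and> successive_derivs D)"
  unfolding smooth_real_def successive_derivs_def ..

lemma successive_derivs_continuous:
  "successive_derivs D \<Longrightarrow> continuous_on UNIV (D n)"
  unfolding successive_derivs_def
  by (meson DERIV_isCont continuous_at_imp_continuous_on)

lemma successive_derivs_const: "successive_derivs (\<lambda>n x. if n = 0 then c else 0)"
  unfolding successive_derivs_def by simp

lemma successive_derivs_add:
  "successive_derivs D \<Longrightarrow> successive_derivs E \<Longrightarrow> successive_derivs (\<lambda>n x. D n x + E n x)"
  unfolding successive_derivs_def by (auto intro: DERIV_add)

lemma successive_derivs_affine:
  assumes "successive_derivs D"
  shows "successive_derivs (\<lambda>n x. a ^ n * D n (a * x + b))"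
  unfolding successive_derivs_def
proof (intro allI)
  fix n x
  have "((\<lambda>x. a * x + b) has_real_derivative a) (at x)"
    by (auto intro!: derivative_eq_intros)
  from DERIV_cmult[OF DERIV_chain2[OF assms[unfolded successive_derivs_def, rule_format] this], of "a ^ n"]
  show "((\<lambda>x. a ^ n * D n (a * x + b)) has_real_derivative a ^ Suc n * D (Suc n) (a * x + b)) (at x)"
    by (simp add: algebra_simps)
qed

definition leibniz_product :: "(nat \<Rightarrow> real \<Rightarrow> real) \<Rightarrow> (nat \<Rightarrow> real \<Rightarrow> real) \<Rightarrow> nat \<Rightarrow> real \<Rightarrow> real"
  where "leibniz_product D E n x = (\<Sum>j\<le>n. real (n choose j) * D j x * E (n - j) x)"

lemma leibniz_product_0 [simp]: "leibniz_product D E 0 x = D 0 x * E 0 x"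
  by (simp add: leibniz_product_def)

lemma leibniz_product_Suc:
  "leibniz_product D E (Suc n) x =
     (\<Sum>j\<le>n. real (n choose j) * (D (Suc j) x * E (n - j) x + D j x * E (Suc (n - j)) x))"
proof -
  let ?a = "\<lambda>j. D j x" and ?b = "\<lambda>j. E j x"
  have "leibniz_product D E (Suc n) x =
      ?a 0 * ?b (Suc n) + (\<Sum>j\<le>n. real (Suc n choose Suc j) * ?a (Suc j) * ?b (n - j))"
    unfolding leibniz_product_def by (subst sum.atMost_Suc_shift) simp
  also have "\<dots> = ?a 0 * ?b (Suc n) + (\<Sum>j\<le>n. real (n choose Suc j) * ?a (Suc j) * ?b (n - j))
      + (\<Sum>j\<le>n. real (n choose j) * ?a (Suc j) * ?b (n - j))"
    by (simp add: sum.distrib algebra_simps)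
  also have "?a 0 * ?b (Suc n) + (\<Sum>j\<le>n. real (n choose Suc j) * ?a (Suc j) * ?b (n - j))
      = (\<Sum>j\<le>Suc n. real (n choose j) * ?a j * ?b (Suc n - j))"
    by (subst sum.atMost_Suc_shift) simp
  also have "\<dots> = (\<Sum>j\<le>n. real (n choose j) * ?a j * ?b (Suc (n - j)))"
    by (auto intro!: sum.cong simp: Suc_diff_le)
  finally show ?thesis by (simp add: sum.distrib algebra_simps)
qed

lemma successive_derivs_leibniz_product:
  assumes "successive_derivs D" "successive_derivs E"
  shows "successive_derivs (leibniz_product D E)"
  unfolding successive_derivs_def
proof (intro allI)
  fix n x
  have dD: "\<And>n x. (D n has_real_derivative D (Suc n) x) (at x)"
    and dE: "\<And>n x. (E n has_real_derivative E (Suc n) x) (at x)"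
    using assms unfolding successive_derivs_def by blast+
  have "((\<lambda>x. real (n choose j) * (D j x * E (n - j) x)) has_real_derivative
          real (n choose j) * (D (Suc j) x * E (n - j) x + D j x * E (Suc (n - j)) x)) (at x)" for j
    by (intro DERIV_cmult DERIV_cong[OF DERIV_mult[OF dD dE]]) (simp add: algebra_simps)
  then have "((\<lambda>x. \<Sum>j\<le>n. real (n choose j) * (D j x * E (n - j) x)) has_real_derivative
          (\<Sum>j\<le>n. real (n choose j) * (D (Suc j) x * E (n - j) x + D j x * E (Suc (n - j)) x))) (at x)"
    by (rule DERIV_sum)
  then show "(leibniz_product D E n has_real_derivative leibniz_product D E (Suc n) x) (at x)"
    unfolding leibniz_product_Suc by (simp add: leibniz_product_def[abs_def] mult.assoc)
qed

lemma poly_mult_exp_neg_tendsto_0: "((\<lambda>u::real. poly p u * exp (- u)) \<longlongrightarrow> 0) at_top"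
proof -
  have "poly p u * exp (- u) = (\<Sum>i\<le>degree p. coeff p i * (u ^ i / exp u))" for u
    by (simp add: poly_altdef exp_minus field_simps sum_divide_distrib)
  then show ?thesis
    by (simp only:) (intro tendsto_null_sum tendsto_mult_right_zero tendsto_power_div_exp_0)
qed

text \<open>\<open>expinv_derivs k\<close> is the \<open>k\<close>-th derivative of the flat function equal to \<open>exp (-1/x)\<close>
  for \<open>x > 0\<close> and to \<open>0\<close> otherwise. The recursion for \<open>expinv_poly\<close> comes from
  \<open>(P (1/x) exp (-1/x))' = x\<^sup>-\<^sup>2 (P - P') (1/x) exp (-1/x)\<close>.\<close>

fun expinv_poly :: "nat \<Rightarrow> real poly" where
  "expinv_poly 0 = 1"
| "expinv_poly (Suc k) = [:0, 0, 1:] * (expinv_poly k - pderiv (expinv_poly k))"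

definition expinv_derivs :: "nat \<Rightarrow> real \<Rightarrow> real" where
  "expinv_derivs k x = (if x > 0 then poly (expinv_poly k) (inverse x) * exp (- inverse x) else 0)"

lemma expinv_derivs_nonpos [simp]: "x \<le> 0 \<Longrightarrow> expinv_derivs k x = 0"
  by (simp add: expinv_derivs_def)

lemma expinv_derivs_0_pos: "x > 0 \<Longrightarrow> expinv_derivs 0 x = exp (- inverse x)"
  by (simp add: expinv_derivs_def)

lemma expinv_derivs_0_bounds: "0 \<le> expinv_derivs 0 x" "expinv_derivs 0 x \<le> 1"
  by (auto simp: expinv_derivs_def)

lemma has_real_derivative_poly_inverse_exp:
  assumes "x > 0"
  shows "((\<lambda>y. poly p (inverse y) * exp (- inverse y)) has_real_derivative
          poly ([:0, 0, 1:] * (p - pderiv p)) (inverse x) * exp (- inverse x)) (at x)"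
proof -
  have "((\<lambda>y. poly p (inverse y)) has_real_derivative
        poly (pderiv p) (inverse x) * (- inverse (x\<^sup>2))) (at x)"
    by (rule DERIV_chain2[OF poly_DERIV])
      (use assms in \<open>auto intro!: derivative_eq_intros simp: power2_eq_square\<close>)
  moreover have "((\<lambda>y. exp (- inverse y)) has_real_derivative
        exp (- inverse x) * inverse (x\<^sup>2)) (at x)"
    using assms by (auto intro!: derivative_eq_intros simp: power2_eq_square)
  ultimately show ?thesis
    by (rule DERIV_cong[OF DERIV_mult]) (simp add: algebra_simps power2_eq_square power_inverse)
qed

lemma expinv_derivs_has_derivative_at_0: "(expinv_derivs k has_real_derivative 0) (at 0)"
proof -
  have "((\<lambda>y. expinv_derivs k y / y) \<longlongrightarrow> 0) (at_left 0)"
  proof (rule Lim_transform_eventually[OF tendsto_const])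
    show "\<forall>\<^sub>F y in at_left 0. 0 = expinv_derivs k y / y"
      unfolding eventually_at_left_field by (intro exI[of _ "-1"]) simp
  qed
  moreover have "((\<lambda>y. expinv_derivs k y / y) \<longlongrightarrow> 0) (at_right 0)"
  proof (rule Lim_transform_eventually)
    show "((\<lambda>y. poly (pCons 0 (expinv_poly k)) (inverse y) * exp (- inverse y)) \<longlongrightarrow> 0) (at_right 0)"
      by (rule filterlim_compose[OF poly_mult_exp_neg_tendsto_0 filterlim_inverse_at_top_right])
    show "\<forall>\<^sub>F y in at_right 0. poly (pCons 0 (expinv_poly k)) (inverse y) * exp (- inverse y) =
        expinv_derivs k y / y"
      unfolding eventually_at_right_field
      by (intro exI[of _ 1]) (simp add: expinv_derivs_def divide_inverse)
  qed
  ultimately have "((\<lambda>y. expinv_derivs k y / y) \<longlongrightarrow> 0) (at 0)"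
    by (simp add: filterlim_at_split)
  then show ?thesis by (simp add: has_field_derivative_iff)
qed

lemma successive_derivs_expinv: "successive_derivs expinv_derivs"
  unfolding successive_derivs_def
proof (intro allI)
  fix k and x :: real
  consider "x > 0" | "x < 0" | "x = 0" by linarith
  then show "(expinv_derivs k has_real_derivative expinv_derivs (Suc k) x) (at x)"
  proof cases
    case 1
    show ?thesis
    proof (rule has_field_derivative_transform_within_open[OF _ open_greaterThan[of 0]])
      show "((\<lambda>y. poly (expinv_poly k) (inverse y) * exp (- inverse y)) has_real_derivative
          expinv_derivs (Suc k) x) (at x)"
        using has_real_derivative_poly_inverse_exp[OF 1, of "expinv_poly k"] 1
        by (simp add: expinv_derivs_def)
    qed (use 1 in \<open>auto simp: expinv_derivs_def\<close>)
  next
    case 2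
    show ?thesis
    proof (rule has_field_derivative_transform_within_open[OF _ open_lessThan[of 0]])
      show "((\<lambda>y. 0) has_real_derivative expinv_derivs (Suc k) x) (at x)"
        using 2 by simp
    qed (use 2 in auto)
  qed (simp add: expinv_derivs_has_derivative_at_0)
qed

definition bump_derivs :: "nat \<Rightarrow> real \<Rightarrow> real" where
  "bump_derivs = leibniz_product (\<lambda>n x. expinv_derivs n (1 + x)) (\<lambda>n x. (-1) ^ n * expinv_derivs n (1 - x))"

lemma successive_derivs_bump: "successive_derivs bump_derivs"
proof -
  have "successive_derivs (\<lambda>n x. 1 ^ n * expinv_derivs n (1 * x + 1))"
    and "successive_derivs (\<lambda>n x. (-1) ^ n * expinv_derivs n (-1 * x + 1))"
    by (intro successive_derivs_affine successive_derivs_expinv)+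
  then show ?thesis
    unfolding bump_derivs_def by (intro successive_derivs_leibniz_product) (simp_all add: add.commute)
qed

lemma bump_derivs_outside:
  assumes "1 \<le> \<bar>x\<bar>"
  shows "bump_derivs n x = 0"
proof -
  have "expinv_derivs j (1 + x) = 0 \<or> expinv_derivs m (1 - x) = 0" for j m
    using assms by (cases "0 \<le> x") auto
  then show ?thesis
    unfolding bump_derivs_def leibniz_product_def by (intro sum.neutral) (metis mult_eq_0_iff)
qed

lemma bump_derivs_0: "bump_derivs 0 x = expinv_derivs 0 (1 + x) * expinv_derivs 0 (1 - x)"
  by (simp add: bump_derivs_def)

lemma bump_derivs_0_even: "bump_derivs 0 (- x) = bump_derivs 0 x"
  by (simp add: bump_derivs_0)

lemma bump_derivs_0_bounds: "0 \<le> bump_derivs 0 x" "bump_derivs 0 x \<le> 1"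
  unfolding bump_derivs_0 using expinv_derivs_0_bounds[of "1 + x"] expinv_derivs_0_bounds[of "1 - x"]
  by (auto intro: mult_le_one)

lemma bump_derivs_0_ge:
  assumes "\<bar>x\<bar> \<le> 1/2"
  shows "exp (-4) \<le> bump_derivs 0 x"
proof -
  have "exp (-2) \<le> expinv_derivs 0 t" if "1/2 \<le> t" for t
  proof -
    have "inverse t \<le> 2"
      using le_imp_inverse_le[OF that] by simp
    then show ?thesis using that by (simp add: expinv_derivs_0_pos)
  qed
  then have "exp (-2) * exp (-2) \<le> expinv_derivs 0 (1 + x) * expinv_derivs 0 (1 - x)"
    using assms by (intro mult_mono) (auto simp: expinv_derivs_0_bounds)
  then show ?thesis by (simp add: bump_derivs_0 flip: exp_add)
qed

section \<open>The smoothed weight\<close>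

definition near_ints :: "real \<Rightarrow> int set" where
  "near_ints x = {n. \<bar>x - of_int n\<bar> < 1}"

lemma near_ints_subset:
  assumes "\<bar>y - x\<bar> < 1"
  shows "near_ints y \<subseteq> {\<lfloor>x\<rfloor> - 2..\<lfloor>x\<rfloor> + 2}"
proof
  fix n assume "n \<in> near_ints y"
  then have "\<bar>y - of_int n\<bar> < 1" by (simp add: near_ints_def)
  then have "of_int (\<lfloor>x\<rfloor> - 3) < (of_int n :: real)" "(of_int n :: real) < of_int (\<lfloor>x\<rfloor> + 3)"
    using assms floor_le_iff[of x] by (auto simp: abs_less_iff) linarith+
  then show "n \<in> {\<lfloor>x\<rfloor> - 2..\<lfloor>x\<rfloor> + 2}"
    by (simp only: of_int_less_iff) auto
qed

lemma finite_near_ints: "finite (near_ints x)"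
  by (rule finite_subset[OF near_ints_subset[of x x]]) auto

lemma successive_derivs_translates:
  fixes c :: "int \<Rightarrow> real"
  assumes D: "successive_derivs D" and outside: "\<And>n x. 1 \<le> \<bar>x\<bar> \<Longrightarrow> D n x = 0"
  shows "successive_derivs (\<lambda>n x. \<Sum>m\<in>near_ints x. c m * D n (x - of_int m))"
  unfolding successive_derivs_def
proof (intro allI)
  fix n and x :: real
  define S where "S = {\<lfloor>x\<rfloor> - 2..\<lfloor>x\<rfloor> + 2}"
  have local: "(\<Sum>m\<in>near_ints y. c m * D k (y - of_int m)) = (\<Sum>m\<in>S. c m * D k (y - of_int m))"
    if "\<bar>y - x\<bar> < 1" for y :: real and k
    by (rule sum.mono_neutral_left)
      (use near_ints_subset[OF that] outside in \<open>auto simp: S_def near_ints_def\<close>)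
  have "((\<lambda>y. y - of_int m) has_real_derivative 1) (at x)" for m
    by (auto intro!: derivative_eq_intros)
  then have "((\<lambda>y. \<Sum>m\<in>S. c m * D n (y - of_int m)) has_real_derivative
      (\<Sum>m\<in>S. c m * D (Suc n) (x - of_int m))) (at x)"
    using D unfolding successive_derivs_def
    by (intro DERIV_sum DERIV_cmult) (metis DERIV_chain2 mult.right_neutral)
  then show "((\<lambda>x. \<Sum>m\<in>near_ints x. c m * D n (x - of_int m)) has_real_derivative
      (\<Sum>m\<in>near_ints x. c m * D (Suc n) (x - of_int m))) (at x)"
    unfolding local[of x "Suc n", simplified]
    by (rule has_field_derivative_transform_within_open[of _ _ _ "ball x 1"])
      (auto simp: local dist_real_def abs_minus_commute)
qed

text \<open>The sum runs over \<open>near_ints x\<close> rather than all integers: the other translates of the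
  bump vanish at \<open>x\<close>. This keeps the sum finite.\<close>

definition smooth_weight :: "(real \<Rightarrow> real) \<Rightarrow> real \<Rightarrow> real" where
  "smooth_weight v x = 1 + (\<Sum>n\<in>near_ints x. v (of_int n) * bump_derivs 0 (x - of_int n))"

lemma smooth_real_smooth_weight: "smooth_real (smooth_weight v)"
proof -
  have "successive_derivs (\<lambda>k x. (if k = 0 then 1 else 0) +
      (\<Sum>n\<in>near_ints x. v (of_int n) * bump_derivs k (x - of_int n)))"
    by (intro successive_derivs_add successive_derivs_const successive_derivs_translates
        successive_derivs_bump bump_derivs_outside)
  then show ?thesis
    unfolding smooth_real_iff_successive_derivs
    by (intro exI[of _ "\<lambda>k x. (if k = 0 then 1 else 0) +
        (\<Sum>n\<in>near_ints x. v (of_int n) * bump_derivs k (x - of_int n))"])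
      (simp add: smooth_weight_def[abs_def])
qed

lemma smooth_real_imp_borel_measurable: "smooth_real f \<Longrightarrow> f \<in> borel_measurable borel"
  unfolding smooth_real_iff_successive_derivs
  by (metis successive_derivs_continuous borel_measurable_continuous_onI)

lemma smooth_weight_even:
  assumes "\<And>s. v (- s) = v s"
  shows "smooth_weight v (- x) = smooth_weight v x"
proof -
  have "(\<Sum>n\<in>near_ints (- x). v (of_int n) * bump_derivs 0 (- x - of_int n)) =
      (\<Sum>n\<in>near_ints x. v (- of_int n) * bump_derivs 0 (- (x - of_int n)))"
    by (rule sum.reindex_bij_witness[of _ uminus uminus]) (auto simp: near_ints_def abs_less_iff)
  also have "\<dots> = (\<Sum>n\<in>near_ints x. v (of_int n) * bump_derivs 0 (x - of_int n))"
    by (simp only: assms bump_derivs_0_even)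
  finally show ?thesis by (simp add: smooth_weight_def)
qed

lemma one_le_smooth_weight:
  assumes "\<And>s. 0 \<le> v s"
  shows "1 \<le> smooth_weight v x"
  unfolding smooth_weight_def using assms bump_derivs_0_bounds
  by (simp add: sum_nonneg)

lemma smooth_weight_le:
  assumes v1: "\<And>s. 1 \<le> v s" and K: "\<And>x y. \<bar>x - y\<bar> \<le> 1 \<Longrightarrow> v x \<le> K * v y"
  shows "smooth_weight v x \<le> (1 + 5 * K) * v x"
proof -
  have term_le: "v (of_int n) * bump_derivs 0 (x - of_int n) \<le> K * v x" if "n \<in> near_ints x" for n
  proof -
    have "v (of_int n) * bump_derivs 0 (x - of_int n) \<le> v (of_int n)"
      using bump_derivs_0_bounds[of "x - of_int n"] v1[of "of_int n"] by (simp add: mult_le_cancel_left1)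
    also have "\<dots> \<le> K * v x"
      using that by (intro K) (simp add: near_ints_def abs_minus_commute)
    finally show ?thesis .
  qed
  have K1: "1 \<le> K" using K[of x x] v1[of x] by simp
  have "card (near_ints x) \<le> 5"
    using card_mono[OF _ near_ints_subset[of x x]] by simp
  have "(\<Sum>n\<in>near_ints x. v (of_int n) * bump_derivs 0 (x - of_int n)) \<le>
      of_nat (card (near_ints x)) * (K * v x)"
    by (rule sum_bounded_above[OF term_le])
  also have "\<dots> \<le> 5 * (K * v x)"
    using \<open>card (near_ints x) \<le> 5\<close> K1 v1[of x] by (intro mult_right_mono) auto
  finally show ?thesis using v1[of x] by (simp add: smooth_weight_def algebra_simps)
qed

lemma le_smooth_weight:
  assumes v1: "\<And>s. 1 \<le> v s" and K: "\<And>x y. \<bar>x - y\<bar> \<le> 1 \<Longrightarrow> v x \<le> K * v y"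
  shows "v x \<le> K * exp 4 * smooth_weight v x"
proof -
  have "0 \<le> K" using K[of x x] v1[of x] by (simp add: mult_le_cancel_right1)
  have near: "\<bar>x - of_int (round x)\<bar> \<le> 1/2"
    using of_int_round_abs_le[of x] by (simp add: abs_minus_commute)
  have terms_nonneg: "0 \<le> v (of_int n) * bump_derivs 0 (x - of_int n)" for n
    using v1[of "of_int n"] bump_derivs_0_bounds(1) by simp
  have "v (of_int (round x)) * exp (-4) \<le> v (of_int (round x)) * bump_derivs 0 (x - of_int (round x))"
    using bump_derivs_0_ge[OF near] v1[of "of_int (round x)"] by (intro mult_left_mono) auto
  also have "\<dots> \<le> (\<Sum>n\<in>near_ints x. v (of_int n) * bump_derivs 0 (x - of_int n))"
    using near terms_nonneg by (intro member_le_sum finite_near_ints) (auto simp: near_ints_def)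
  also have "\<dots> \<le> smooth_weight v x" by (simp add: smooth_weight_def)
  finally have sample_le: "v (of_int (round x)) \<le> exp 4 * smooth_weight v x"
    by (simp add: exp_minus field_simps)
  have "v x \<le> K * v (of_int (round x))"
    using near by (intro K) simp
  also have "\<dots> \<le> K * (exp 4 * smooth_weight v x)"
    using sample_le \<open>0 \<le> K\<close> by (rule mult_left_mono)
  finally show ?thesis by (simp add: mult.assoc)
qed

lemma smooth_weight_comparable:
  assumes v1: "\<And>s. 1 \<le> v s" and K: "\<And>x y. \<bar>x - y\<bar> \<le> 1 \<Longrightarrow> v x \<le> K * v y"
  obtains c where "c > 0" "\<And>s. smooth_weight v s \<le> c * v s" "\<And>s. v s \<le> c * smooth_weight v s"
proof
  have "1 \<le> K" using K[of 0 0] v1[of 0] by simp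
  then show "0 < 1 + 5 * K + K * exp 4" by (simp add: add_pos_pos)
  show "smooth_weight v s \<le> (1 + 5 * K + K * exp 4) * v s" for s
  proof -
    have "(1 + 5 * K) * v s \<le> (1 + 5 * K + K * exp 4) * v s"
      using \<open>1 \<le> K\<close> v1[of s] by (intro mult_right_mono) auto
    then show ?thesis using smooth_weight_le[of v K s, OF v1 K] by linarith
  qed
  show "v s \<le> (1 + 5 * K + K * exp 4) * smooth_weight v s" for s
  proof -
    have "K * exp 4 * smooth_weight v s \<le> (1 + 5 * K + K * exp 4) * smooth_weight v s"
      using \<open>1 \<le> K\<close> one_le_smooth_weight[of v s] v1 by (intro mult_right_mono) (auto intro: order.trans[OF zero_le_one])
    then show ?thesis using le_smooth_weight[of v K s, OF v1 K] by linarith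
  qed
qed

lemma admissible_if_comparable:
  assumes "admissible v" and "w \<in> borel_measurable borel" and w1: "\<And>s. 1 \<le> w s"
    and w_le: "\<And>s. w s \<le> c * v s" and v_le: "\<And>s. v s \<le> c * w s"
  shows "admissible w"
proof -
  obtain C where C: "C > 0" "\<And>s t. v (s + t) \<le> C * (v s + v t)"
    using admissible_add_le[OF assms(1)] by blast
  have "0 < c"
  proof (rule ccontr)
    assume "\<not> 0 < c"
    then have "c * w 0 \<le> 0" using w1[of 0] by (simp add: mult_nonpos_nonneg)
    then show False using v_le[of 0] assms(1) by (auto simp: admissible_def dest: spec[of _ 0])
  qed
  have "w (s + t) / (w s + w t) \<le> c * C * c" for s t
  proof -
    have "w (s + t) \<le> c * v (s + t)" by (rule w_le)
    also have "\<dots> \<le> c * (C * (v s + v t))"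
      using C(2)[of s t] \<open>0 < c\<close> by simp
    also have "\<dots> \<le> c * (C * (c * w s + c * w t))"
      using v_le[of s] v_le[of t] C(1) \<open>0 < c\<close> by (intro mult_left_mono add_mono) auto
    finally have "w (s + t) \<le> c * C * c * (w s + w t)" by (simp add: algebra_simps)
    moreover have "0 < w s + w t" using w1[of s] w1[of t] by simp
    ultimately show ?thesis by (simp add: pos_divide_le_eq)
  qed
  then show ?thesis using assms(2) w1 unfolding admissible_def by blast
qed

theorem lemma2p6:
  fixes v :: "real \<Rightarrow> real"
  assumes "admissible v"
  shows "\<exists>w. admissible w \<and> smooth_real w \<and>
           (\<exists>c>0. \<forall>s. w s / c \<le> v s \<and> v s \<le> c * w s) \<and>
           ((\<forall>s. v (- s) = v s) \<longrightarrow> (\<forall>s. w (- s) = w s))"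
proof -
  have v1: "\<And>s. 1 \<le> v s" using assms by (simp add: admissible_def)
  then have v0: "\<And>s. 0 \<le> v s" by (meson order.trans zero_le_one)
  obtain K where K: "\<And>x y. \<bar>x - y\<bar> \<le> 1 \<Longrightarrow> v x \<le> K * v y"
    using admissible_neighbour_le[OF assms] by blast
  obtain c where c: "c > 0" "\<And>s. smooth_weight v s \<le> c * v s" "\<And>s. v s \<le> c * smooth_weight v s"
    using smooth_weight_comparable[of v K, OF v1 K] by blast
  have smooth: "smooth_real (smooth_weight v)"
    by (rule smooth_real_smooth_weight)
  have "admissible (smooth_weight v)"
    using assms smooth_real_imp_borel_measurable[OF smooth] one_le_smooth_weight[OF v0] c(2,3)
    by (rule admissible_if_comparable)
  moreover have "\<forall>s. smooth_weight v s / c \<le> v s \<and> v s \<le> c * smooth_weight v s"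
    using c by (simp add: divide_le_eq mult.commute)
  ultimately show ?thesis
    using smooth c(1) smooth_weight_even by blast
qed

end
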